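(* For $n\ge 2$, $\frac{9}{5}(n-1)\le g(K_3,K_n)\le 2(n-1)$.
   Context: $K_m$ is the complete graph on $m$ vertices. A complete bipartite subgraph of a graph $G$ has two disjoint nonempty vertex classes $X,Y$ and edge set all $xy$ with $x\in X,y\in Y$. For graphs $G,H$, a block is a set $E(B_1)\times E(B_2)$ where $B_1$ is a complete bipartite subgraph of $G$ and $B_2$ a complete bipartite subgraph of $H$; $g(G,H)$ is the minimum number of blocks partitioning $E(G)\times E(H)$. *)

theory Defs
  imports Complex_Main
begin

text \<open>A (simple) graph is represented by its edge set: a set of 2-element vertex sets.\<close>

definition complete_graph :: "nat \<Rightarrow> nat set set" where
  "complete_graph m = {{i, j} | i j. i < m \<and> j < m \<and> i \<noteq> j}"

definition cbs_edge_sets :: "'a set set \<Rightarrow> 'a set set set" where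
  "cbs_edge_sets E = { {{x, y} | x y. x \<in> X \<and> y \<in> Y} | X Y.
      X \<noteq> {} \<and> Y \<noteq> {} \<and> X \<inter> Y = {} \<and> (\<forall>x\<in>X. \<forall>y\<in>Y. {x, y} \<in> E) }"

definition blocks :: "'a set set \<Rightarrow> 'b set set \<Rightarrow> ('a set \<times> 'b set) set set" where
  "blocks EG EH = { B1 \<times> B2 | B1 B2. B1 \<in> cbs_edge_sets EG \<and> B2 \<in> cbs_edge_sets EH }"

definition block_partition :: "'a set set \<Rightarrow> 'b set set \<Rightarrow> ('a set \<times> 'b set) set set \<Rightarrow> bool" where
  "block_partition EG EH P \<longleftrightarrow> finite P \<and> P \<subseteq> blocks EG EH
      \<and> (\<forall>A\<in>P. \<forall>B\<in>P. A \<noteq> B \<longrightarrow> A \<inter> B = {})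
      \<and> \<Union>P = EG \<times> EH"

definition g :: "'a set set \<Rightarrow> 'b set set \<Rightarrow> nat" where
  "g EG EH = (LEAST k. \<exists>P. block_partition EG EH P \<and> card P = k)"


end

theory Submission
  imports Defs "HOL-Library.Disjoint_Sets"
begin

text \<open>Upper bound: multiplying the two stars that partition \<open>K\<^sub>3\<close> with the \<open>n - 1\<close> stars of the
  Graham--Pollak partition of \<open>K\<^sub>n\<close> gives \<open>2(n - 1)\<close> blocks.

  Lower bound: attach to an edge set \<open>E\<close> the quadratic form \<open>q E x = \<Sum>{u,v}\<in>E. x u * x v\<close>. The form
  of a biclique with classes \<open>X, Y\<close> is \<open>(\<Sum>X x) * (\<Sum>Y x)\<close> and vanishes on a hyperplane, while
  \<open>2 * q K\<^sub>n x = (\<Sum>x)\<^sup>2 - \<Sum>x\<^sup>2\<close> is negative at the nonzero points of \<open>\<Sum>x = 0\<close>; so, as in the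
  Graham--Pollak theorem, \<open>q K\<^sub>n\<close> is no linear combination of fewer than \<open>n - 1\<close> biclique forms.
  Given a block partition of \<open>E(G) \<times> E(K\<^sub>n)\<close> and weights \<open>w\<close> on \<open>E(G)\<close> with nonzero total,
  \<open>\<Sum>B\<^sub>1 \<times> B\<^sub>2. w(B\<^sub>1) * q B\<^sub>2 = (\<Sum>w) * q K\<^sub>n\<close>, so at least \<open>n - 1\<close> blocks have \<open>w(B\<^sub>1) \<noteq> 0\<close>.
  For the triangle take nine weights: each edge indicator twice, and \<open>e + e' - e''\<close> for each edge
  \<open>e''\<close>. A biclique of the triangle has one or two edges, and either way exactly five of the nine
  weights are nonzero on it; summing the nine bounds gives \<open>9(n - 1) \<le> 5 g(K\<^sub>3, K\<^sub>n)\<close>.\<close>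

section \<open>Biclique partitions and the upper bound\<close>

lemma cbs_edge_sets_nonempty_subset:
  assumes "S \<in> cbs_edge_sets E"
  shows "S \<noteq> {}" and "S \<subseteq> E"
  using assms unfolding cbs_edge_sets_def by blast+

lemma cbs_edge_sets_triangle_free:
  assumes "S \<in> cbs_edge_sets E"
  shows "\<not> {{a, b}, {a, c}, {b, c}} \<subseteq> S"
proof
  assume tri: "{{a, b}, {a, c}, {b, c}} \<subseteq> S"
  obtain X Y where S: "S = {{x, y} | x y. x \<in> X \<and> y \<in> Y}" and XY: "X \<inter> Y = {}"
    using assms unfolding cbs_edge_sets_def by blast
  have side: "(u \<in> X \<and> v \<in> Y) \<or> (v \<in> X \<and> u \<in> Y)" if "{u, v} \<in> S" for u v
    using that unfolding S by (auto simp: doubleton_eq_iff)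
  have "(a \<in> X \<and> b \<in> Y) \<or> (b \<in> X \<and> a \<in> Y)"
       "(a \<in> X \<and> c \<in> Y) \<or> (c \<in> X \<and> a \<in> Y)"
       "(b \<in> X \<and> c \<in> Y) \<or> (c \<in> X \<and> b \<in> Y)"
    using side tri by auto
  then show False
    using XY by auto
qed

lemma finite_complete_graph: "finite (complete_graph n)"
  by (rule finite_subset[of _ "Pow {..<n}"]) (auto simp: complete_graph_def)

lemma complete_graph_Suc:
  "complete_graph (Suc n) = complete_graph n \<union> (\<lambda>i. {n, i}) ` {..<n}"
  unfolding complete_graph_def by (auto simp: less_Suc_eq)

lemma complete_graph_edge_less:
  "{u, v} \<in> complete_graph n \<Longrightarrow> u < n"
  unfolding complete_graph_def by (auto simp: doubleton_eq_iff)

definition biclique_partition :: "'a set set \<Rightarrow> 'a set set set \<Rightarrow> bool" where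
  "biclique_partition E \<S> \<longleftrightarrow> partition_on E \<S> \<and> \<S> \<subseteq> cbs_edge_sets E"

definition star :: "nat \<Rightarrow> nat set set" where
  "star k = (\<lambda>i. {k, i}) ` {..<k}"

lemma star_cbs_edge_sets:
  assumes "0 < k" "k < n"
  shows "star k \<in> cbs_edge_sets (complete_graph n)"
proof -
  have "star k = {{x, y} | x y. x \<in> {k} \<and> y \<in> {..<k}}"
    unfolding star_def by auto
  moreover have "\<forall>x\<in>{k}. \<forall>y\<in>{..<k}. {x, y} \<in> complete_graph n"
    using assms unfolding complete_graph_def by fastforce
  ultimately show ?thesis
    using assms unfolding cbs_edge_sets_def by blast
qed

lemma star_subset: "star k \<subseteq> complete_graph n" if "k < n"
  using that unfolding star_def complete_graph_def by force

lemma disjnt_star: "k \<noteq> l \<Longrightarrow> disjnt (star k) (star l)"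
  unfolding star_def disjnt_def by (auto simp: doubleton_eq_iff)

lemma biclique_partition_stars:
  "biclique_partition (complete_graph n) (star ` {0<..<n})"
  unfolding biclique_partition_def
proof (intro conjI partition_onI)
  show "\<Union> (star ` {0<..<n}) = complete_graph n"
  proof
    show "\<Union> (star ` {0<..<n}) \<subseteq> complete_graph n"
      by (simp add: UN_subset_iff star_subset)
    show "complete_graph n \<subseteq> \<Union> (star ` {0<..<n})"
    proof
      fix e assume "e \<in> complete_graph n"
      then obtain i j where ij: "e = {i, j}" "i < n" "j < n" "i \<noteq> j"
        unfolding complete_graph_def by blast
      then have "e = {max i j, min i j}" "min i j < max i j"
        by (auto simp: max_def min_def insert_commute)
      moreover have "max i j \<in> {0<..<n}"
        using ij by (simp add: max_def)
      ultimately show "e \<in> \<Union> (star ` {0<..<n})"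
        unfolding star_def by blast
    qed
  qed
  show "star ` {0<..<n} \<subseteq> cbs_edge_sets (complete_graph n)"
    using star_cbs_edge_sets by auto
  then show "{} \<notin> star ` {0<..<n}"
    using cbs_edge_sets_nonempty_subset(1) by blast
  fix p q assume "p \<in> star ` {0<..<n}" "q \<in> star ` {0<..<n}" "p \<noteq> q"
  then obtain k l where "p = star k" "q = star l" "k \<noteq> l"
    by auto
  then show "disjnt p q"
    by (simp add: disjnt_star)
qed

lemma card_stars: "card (star ` {0<..<n}) = n - 1"
proof -
  have "inj_on star {0<..<n}"
  proof (rule inj_onI)
    fix k l assume kl: "k \<in> {0<..<n}" "l \<in> {0<..<n}" "star k = star l"
    have "{k, 0} \<in> star k"
      using kl(1) unfolding star_def by auto
    then have "{k, 0} \<in> star l"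
      using kl(3) by simp
    then show "k = l"
      using kl(2) unfolding star_def by (auto simp: doubleton_eq_iff)
  qed
  then show ?thesis
    by (simp add: card_image)
qed

lemma block_partition_product:
  assumes \<S>: "biclique_partition EG \<S>" "finite EG"
    and \<T>: "biclique_partition EH \<T>" "finite EH"
  shows "block_partition EG EH {S \<times> T | S T. S \<in> \<S> \<and> T \<in> \<T>}"
    and "card {S \<times> T | S T. S \<in> \<S> \<and> T \<in> \<T>} = card \<S> * card \<T>"
proof -
  have part: "partition_on EG \<S>" "partition_on EH \<T>"
    and cbs: "\<S> \<subseteq> cbs_edge_sets EG" "\<T> \<subseteq> cbs_edge_sets EH"
    using \<S>(1) \<T>(1) unfolding biclique_partition_def by auto
  have fin: "finite \<S>" "finite \<T>"
    using finite_elements part \<S>(2) \<T>(2) by blast+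
  have ne: "{} \<notin> \<S>" "{} \<notin> \<T>"
    using part partition_onD3 by blast+
  let ?P = "{S \<times> T | S T. S \<in> \<S> \<and> T \<in> \<T>}"
  have eq: "?P = (\<lambda>(S, T). S \<times> T) ` (\<S> \<times> \<T>)"
    by auto
  have "inj_on (\<lambda>(S, T). S \<times> T) (\<S> \<times> \<T>)"
    using ne by (auto simp: inj_on_def times_eq_iff)
  then show "card ?P = card \<S> * card \<T>"
    unfolding eq by (simp add: card_image card_cartesian_product)
  have "A \<inter> B = {}" if AB: "A \<in> ?P" "B \<in> ?P" "A \<noteq> B" for A B
  proof -
    obtain S T S' T' where ST: "A = S \<times> T" "B = S' \<times> T'" "S \<in> \<S>" "T \<in> \<T>" "S' \<in> \<S>" "T' \<in> \<T>"
      using AB(1,2) by blast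
    have "S \<noteq> S' \<or> T \<noteq> T'"
      using AB(3) ST(1,2) by blast
    then have "disjnt S S' \<or> disjnt T T'"
      using ST(3-6) partition_onD2[OF part(1)] partition_onD2[OF part(2)] by (meson pairwiseD)
    then show ?thesis
      using ST(1,2) by (auto simp: disjnt_def)
  qed
  moreover have "?P \<subseteq> blocks EG EH"
    using cbs unfolding blocks_def by blast
  moreover have "\<Union> ?P = \<Union>\<S> \<times> \<Union>\<T>"
    by blast
  moreover have "finite ?P"
    unfolding eq using fin by simp
  ultimately show "block_partition EG EH ?P"
    unfolding block_partition_def using partition_onD1[OF part(1)] partition_onD1[OF part(2)]
    by simp
qed

lemma g_le_card: "block_partition EG EH P \<Longrightarrow> g EG EH \<le> card P"
  unfolding g_def by (rule Least_le) blast

lemma g_attained: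
  assumes "block_partition EG EH P"
  obtains Q where "block_partition EG EH Q" "card Q = g EG EH"
  using LeastI_ex[of "\<lambda>k. \<exists>Q. block_partition EG EH Q \<and> card Q = k"] assms
  unfolding g_def by blast

lemma block_partition_complete_graph_3_stars:
  obtains P where "block_partition (complete_graph 3) (complete_graph n) P" "card P = 2 * (n - 1)"
proof
  let ?P = "{S \<times> T | S T. S \<in> star ` {0<..<3} \<and> T \<in> star ` {0<..<n}}"
  note product = block_partition_product[OF biclique_partition_stars finite_complete_graph
      biclique_partition_stars finite_complete_graph]
  show "block_partition (complete_graph 3) (complete_graph n) ?P"
    by (rule product(1))
  show "card ?P = 2 * (n - 1)"
    using product(2) by (simp add: card_stars)
qed

section \<open>The quadratic form of an edge set\<close>

definition edge_form :: "'a set set \<Rightarrow> ('a \<Rightarrow> real) \<Rightarrow> real" where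
  "edge_form E x = (\<Sum>e\<in>E. \<Prod>v\<in>e. x v)"

lemma edge_form_biclique:
  assumes "finite X" "finite Y" "X \<inter> Y = {}"
  shows "edge_form {{u, v} | u v. u \<in> X \<and> v \<in> Y} x = (\<Sum>u\<in>X. x u) * (\<Sum>v\<in>Y. x v)"
proof -
  have eq: "{{u, v} | u v. u \<in> X \<and> v \<in> Y} = (\<lambda>(u, v). {u, v}) ` (X \<times> Y)"
    by auto
  have inj: "inj_on (\<lambda>(u, v). {u, v}) (X \<times> Y)"
    using assms(3) by (auto simp: inj_on_def doubleton_eq_iff)
  have "edge_form {{u, v} | u v. u \<in> X \<and> v \<in> Y} x = (\<Sum>(u, v)\<in>X \<times> Y. \<Prod>w\<in>{u, v}. x w)"
    unfolding edge_form_def eq by (subst sum.reindex[OF inj]) (simp add: case_prod_beta)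
  also have "\<dots> = (\<Sum>(u, v)\<in>X \<times> Y. x u * x v)"
    using assms(3) by (intro sum.cong) (auto simp: disjoint_iff_not_equal)
  also have "\<dots> = (\<Sum>u\<in>X. x u) * (\<Sum>v\<in>Y. x v)"
    by (simp add: sum_product sum.cartesian_product)
  finally show ?thesis .
qed

lemma edge_form_complete_graph:
  "2 * edge_form (complete_graph n) x = (\<Sum>i<n. x i)\<^sup>2 - (\<Sum>i<n. (x i)\<^sup>2)"
proof (induction n)
  case 0
  then show ?case
    by (simp add: edge_form_def complete_graph_def)
next
  case (Suc n)
  have disjoint: "complete_graph n \<inter> (\<lambda>i. {n, i}) ` {..<n} = {}"
    using complete_graph_edge_less by blast
  have "inj_on (\<lambda>i. {n, i}) {..<n}"
    by (auto simp: inj_on_def doubleton_eq_iff)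
  then have "edge_form ((\<lambda>i. {n, i}) ` {..<n}) x = x n * (\<Sum>i<n. x i)"
    unfolding edge_form_def by (simp add: sum.reindex sum_distrib_left)
  moreover have "edge_form (complete_graph (Suc n)) x
      = edge_form (complete_graph n) x + edge_form ((\<lambda>i. {n, i}) ` {..<n}) x"
    unfolding complete_graph_Suc edge_form_def
    by (rule sum.union_disjoint[OF finite_complete_graph _ disjoint]) simp
  ultimately show ?case
    using Suc by (simp add: power2_eq_square algebra_simps)
qed

definition vanishes_on_hyperplane :: "nat \<Rightarrow> ((nat \<Rightarrow> real) \<Rightarrow> real) \<Rightarrow> bool" where
  "vanishes_on_hyperplane n f \<longleftrightarrow> (\<exists>a. \<forall>x. (\<Sum>i<n. a i * x i) = 0 \<longrightarrow> f x = 0)"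

lemma vanishes_on_hyperplane_biclique:
  assumes "B \<in> cbs_edge_sets (complete_graph n)"
  shows "vanishes_on_hyperplane n (edge_form B)"
proof -
  obtain X Y where B: "B = {{u, v} | u v. u \<in> X \<and> v \<in> Y}" "X \<noteq> {}" "Y \<noteq> {}" "X \<inter> Y = {}"
    and edges: "\<forall>u\<in>X. \<forall>v\<in>Y. {u, v} \<in> complete_graph n"
    using assms unfolding cbs_edge_sets_def by blast
  have X: "X \<subseteq> {..<n}" and Y: "Y \<subseteq> {..<n}"
    using B(2,3) edges complete_graph_edge_less by (fastforce simp: insert_commute)+
  have "edge_form B x = 0" if "(\<Sum>i<n. of_bool (i \<in> X) * x i) = 0" for x
  proof -
    have "(\<Sum>u\<in>X. x u) = 0"
      using that X by (simp add: inf.absorb2)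
    moreover have "finite X" "finite Y"
      using X Y finite_subset by auto
    ultimately show ?thesis
      using B(1,4) by (simp add: edge_form_biclique)
  qed
  then show ?thesis
    unfolding vanishes_on_hyperplane_def by (intro exI[of _ "\<lambda>i. of_bool (i \<in> X)"]) blast
qed

section \<open>The Graham--Pollak bound\<close>

lemma sum_mult_fun_upd:
  assumes "finite V" "j \<in> V"
  shows "(\<Sum>i\<in>V. c i * (y(j := t)) i) = c j * t + (\<Sum>i\<in>V - {j}. c i * y i)"
  using assms by (simp add: sum.remove)

text \<open>Solve one equation \<open>a\<close> for an unknown \<open>j\<close> with \<open>a j \<noteq> 0\<close>, substitute into the others and
  recurse.\<close>

lemma homogeneous_system_nontrivial_solution:
  fixes A :: "('i \<Rightarrow> real) set"
  assumes "finite V" "finite A" "card A < card V"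
  shows "\<exists>x. (\<exists>i\<in>V. x i \<noteq> 0) \<and> (\<forall>a\<in>A. (\<Sum>i\<in>V. a i * x i) = 0)"
  using assms
proof (induction "card A" arbitrary: A V rule: less_induct)
  case less
  show ?case
  proof (cases "A = {}")
    case True
    then show ?thesis
      using less.prems by (intro exI[of _ "\<lambda>_. 1"]) (auto simp: card_gt_0_iff)
  next
    case False
    then obtain a where a: "a \<in> A"
      by blast
    define A' where "A' = A - {a}"
    have A': "finite A'" "card A' < card A" "A = insert a A'"
      using less.prems(2) a card_Diff1_less[OF less.prems(2) a] unfolding A'_def by auto
    show ?thesis
    proof (cases "\<forall>i\<in>V. a i = 0")
      case True
      then show ?thesis
        using less.hyps[of A' V] less.prems A' by auto
    next
      case False
      then obtain j where j: "j \<in> V" "a j \<noteq> 0"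
        by blast
      define eliminate where "eliminate b i = b i - b j / a j * a i" for b :: "'i \<Rightarrow> real" and i
      have "card (eliminate ` A') < card (V - {j})"
        using card_image_le[OF A'(1), of eliminate] A' less.prems j by simp
      then obtain y where y: "\<exists>i\<in>V - {j}. y i \<noteq> 0"
          "\<forall>b\<in>A'. (\<Sum>i\<in>V - {j}. eliminate b i * y i) = 0"
        using less.hyps[of "eliminate ` A'" "V - {j}"] less.prems A'
        by (auto intro: le_less_trans[OF card_image_le])
      define t where "t = - (\<Sum>i\<in>V - {j}. a i * y i) / a j"
      have "(\<Sum>i\<in>V. b i * (y(j := t)) i) = 0" if "b \<in> A" for b
      proof (cases "b = a")
        case True
        then show ?thesis
          unfolding sum_mult_fun_upd[OF less.prems(1) j(1)] t_def using j(2) by simp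
      next
        case False
        then have "(\<Sum>i\<in>V - {j}. eliminate b i * y i) = 0"
          using y(2) that A'(3) by blast
        then have "(\<Sum>i\<in>V - {j}. b i * y i) = b j / a j * (\<Sum>i\<in>V - {j}. a i * y i)"
          unfolding eliminate_def by (simp add: algebra_simps sum_subtractf sum_distrib_left)
        then show ?thesis
          unfolding sum_mult_fun_upd[OF less.prems(1) j(1)] t_def using j(2) by (simp add: field_simps)
      qed
      moreover have "\<exists>i\<in>V. (y(j := t)) i \<noteq> 0"
        using y(1) by auto
      ultimately show ?thesis
        by blast
    qed
  qed
qed

lemma graham_pollak_count:
  assumes "finite K"
    and vanish: "\<And>k. k \<in> K \<Longrightarrow> vanishes_on_hyperplane n (G k)"
    and sum_eq: "\<And>x. (\<Sum>k\<in>K. c k * G k x) = edge_form (complete_graph n) x"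
  shows "n - 1 \<le> card {k\<in>K. c k \<noteq> 0}"
proof (rule ccontr)
  define K' where "K' = {k\<in>K. c k \<noteq> 0}"
  assume "\<not> n - 1 \<le> card {k\<in>K. c k \<noteq> 0}"
  then have small: "card K' + 1 < n"
    unfolding K'_def by simp
  have "\<forall>k\<in>K. \<exists>a. \<forall>x. (\<Sum>i<n. a i * x i) = 0 \<longrightarrow> G k x = 0"
    using vanish unfolding vanishes_on_hyperplane_def by blast
  then obtain a where a: "\<forall>k\<in>K. \<forall>x. (\<Sum>i<n. a k i * x i) = 0 \<longrightarrow> G k x = 0"
    by (auto dest!: bchoice)
  let ?A = "insert (\<lambda>_. 1) (a ` K')"
  have "finite K'"
    using \<open>finite K\<close> unfolding K'_def by simp
  then have "card ?A \<le> Suc (card (a ` K'))" "card (a ` K') \<le> card K'"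
    by (simp_all add: card_insert_if card_image_le)
  then have "card ?A < card {..<n}"
    using small by simp
  moreover have "finite ?A"
    using \<open>finite K'\<close> by simp
  ultimately obtain x where x: "\<exists>i\<in>{..<n}. x i \<noteq> 0" "\<forall>b\<in>?A. (\<Sum>i<n. b i * x i) = 0"
    using homogeneous_system_nontrivial_solution[OF finite_lessThan] by blast
  have "c k * G k x = 0" if "k \<in> K" for k
    using a x(2) that unfolding K'_def by (cases "c k = 0") auto
  then have "edge_form (complete_graph n) x = 0"
    unfolding sum_eq[symmetric] by (rule sum.neutral[OF ballI])
  moreover have "(\<Sum>i<n. x i) = 0"
    using x(2) by simp
  ultimately have "(\<Sum>i<n. (x i)\<^sup>2) = 0"
    using edge_form_complete_graph[of n x] by simp
  then show False
    using x(1) by (simp add: sum_nonneg_eq_0_iff)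
qed

section \<open>Block partitions\<close>

lemma blocks_fst_snd:
  assumes "A \<in> blocks EG EH"
  shows "A = fst ` A \<times> snd ` A" and "fst ` A \<in> cbs_edge_sets EG" and "snd ` A \<in> cbs_edge_sets EH"
proof -
  obtain B1 B2 where A: "A = B1 \<times> B2" "B1 \<in> cbs_edge_sets EG" "B2 \<in> cbs_edge_sets EH"
    using assms unfolding blocks_def by blast
  moreover have "B1 \<noteq> {}" "B2 \<noteq> {}"
    using A(2,3) cbs_edge_sets_nonempty_subset(1) by blast+
  ultimately have "fst ` A = B1" "snd ` A = B2"
    by auto
  with A show "A = fst ` A \<times> snd ` A" "fst ` A \<in> cbs_edge_sets EG" "snd ` A \<in> cbs_edge_sets EH"
    by simp_all
qed

text \<open>Fixing an edge \<open>e\<close> of \<open>G\<close>, the blocks through \<open>e\<close> cut out a partition of \<open>H\<close>.\<close>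

lemma edge_form_block_partition_slice:
  assumes P: "block_partition EG EH P" and "e \<in> EG" "finite EH"
  shows "edge_form EH x = (\<Sum>A\<in>{A\<in>P. e \<in> fst ` A}. edge_form (snd ` A) x)"
proof -
  let ?Pe = "{A\<in>P. e \<in> fst ` A}"
  have finite: "finite P" and blocks: "P \<subseteq> blocks EG EH"
    and disjoint: "\<forall>A\<in>P. \<forall>B\<in>P. A \<noteq> B \<longrightarrow> A \<inter> B = {}" and cover: "\<Union>P = EG \<times> EH"
    using P unfolding block_partition_def by auto
  have product: "A = fst ` A \<times> snd ` A" if "A \<in> P" for A
    using that blocks blocks_fst_snd(1) by blast
  have "EH = (\<Union>A\<in>?Pe. snd ` A)"
  proof
    show "EH \<subseteq> (\<Union>A\<in>?Pe. snd ` A)"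
    proof
      fix f assume "f \<in> EH"
      then obtain A where "A \<in> P" "(e, f) \<in> A"
        using cover \<open>e \<in> EG\<close> by blast
      then show "f \<in> (\<Union>A\<in>?Pe. snd ` A)"
        by (auto intro!: rev_image_eqI)
    qed
    show "(\<Union>A\<in>?Pe. snd ` A) \<subseteq> EH"
      using cover by force
  qed
  moreover have "snd ` A \<inter> snd ` B = {}" if "A \<in> ?Pe" "B \<in> ?Pe" "A \<noteq> B" for A B
  proof -
    have "(e, f) \<in> A \<inter> B" if "f \<in> snd ` A" "f \<in> snd ` B" for f
      using that \<open>A \<in> ?Pe\<close> \<open>B \<in> ?Pe\<close> product by blast
    then show ?thesis
      using disjoint that by blast
  qed
  moreover have "finite (snd ` A)" if "A \<in> ?Pe" for A
  proof -
    have "snd ` A \<subseteq> EH"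
      using that cover by force
    then show ?thesis
      using \<open>finite EH\<close> finite_subset by blast
  qed
  ultimately show ?thesis
    unfolding edge_form_def using finite by (simp add: sum.UNION_disjoint)
qed

lemma edge_form_block_partition_weighted:
  assumes P: "block_partition EG EH P" and "finite EG" "finite EH"
  shows "(\<Sum>A\<in>P. (\<Sum>e\<in>fst ` A. w e) * edge_form (snd ` A) x) = (\<Sum>e\<in>EG. w e) * edge_form EH x"
proof -
  have "finite P" and cover: "\<Union>P = EG \<times> EH"
    using P unfolding block_partition_def by auto
  have restrict: "(\<Sum>e\<in>fst ` A. w e) = (\<Sum>e\<in>EG. of_bool (e \<in> fst ` A) * w e)" if "A \<in> P" for A
  proof -
    have "EG \<inter> {e. e \<in> fst ` A} = fst ` A"
      using that cover by force
    then show ?thesis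
      using \<open>finite EG\<close> by simp
  qed
  have slice: "(\<Sum>A\<in>P. of_bool (e \<in> fst ` A) * edge_form (snd ` A) x) = edge_form EH x"
    if "e \<in> EG" for e
  proof -
    have "P \<inter> {A. e \<in> fst ` A} = {A\<in>P. e \<in> fst ` A}"
      by blast
    then show ?thesis
      using edge_form_block_partition_slice[OF P that \<open>finite EH\<close>] \<open>finite P\<close> by simp
  qed
  have "(\<Sum>A\<in>P. (\<Sum>e\<in>fst ` A. w e) * edge_form (snd ` A) x)
      = (\<Sum>A\<in>P. \<Sum>e\<in>EG. w e * (of_bool (e \<in> fst ` A) * edge_form (snd ` A) x))"
  proof (rule sum.cong[OF refl])
    fix A assume "A \<in> P"
    show "(\<Sum>e\<in>fst ` A. w e) * edge_form (snd ` A) x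
        = (\<Sum>e\<in>EG. w e * (of_bool (e \<in> fst ` A) * edge_form (snd ` A) x))"
      unfolding restrict[OF \<open>A \<in> P\<close>] sum_distrib_right by (simp add: mult_ac)
  qed
  also have "\<dots> = (\<Sum>e\<in>EG. \<Sum>A\<in>P. w e * (of_bool (e \<in> fst ` A) * edge_form (snd ` A) x))"
    by (rule sum.swap)
  also have "\<dots> = (\<Sum>e\<in>EG. w e * edge_form EH x)"
    using slice by (simp add: sum_distrib_left[symmetric])
  finally show ?thesis
    by (simp add: sum_distrib_right)
qed

lemma card_blocks_nonzero_weight:
  fixes w :: "'a set \<Rightarrow> real"
  assumes P: "block_partition EG (complete_graph n) P" and W: "(\<Sum>e\<in>EG. w e) \<noteq> 0"
  shows "n - 1 \<le> card {A\<in>P. (\<Sum>e\<in>fst ` A. w e) \<noteq> 0}"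
proof -
  let ?W = "\<Sum>e\<in>EG. w e"
  have "finite EG"
    using W sum.infinite by blast
  have "finite P" and "P \<subseteq> blocks EG (complete_graph n)"
    using P unfolding block_partition_def by auto
  from \<open>finite P\<close> have "n - 1 \<le> card {A\<in>P. (\<Sum>e\<in>fst ` A. w e) / ?W \<noteq> 0}"
  proof (rule graham_pollak_count)
    show "vanishes_on_hyperplane n (edge_form (snd ` A))" if "A \<in> P" for A
      using that \<open>P \<subseteq> blocks EG (complete_graph n)\<close> blocks_fst_snd(3) vanishes_on_hyperplane_biclique
      by blast
    show "(\<Sum>A\<in>P. (\<Sum>e\<in>fst ` A. w e) / ?W * edge_form (snd ` A) x) = edge_form (complete_graph n) x"
      for x
      using edge_form_block_partition_weighted[OF P \<open>finite EG\<close> finite_complete_graph, of w x] W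
      by (simp add: sum_divide_distrib[symmetric])
  qed
  then show ?thesis
    using W by simp
qed

lemma sum_list_card_filter:
  assumes "finite P"
  shows "(\<Sum>w\<leftarrow>ws. card {A\<in>P. Q w A}) = (\<Sum>A\<in>P. length (filter (\<lambda>w. Q w A) ws))"
proof (induction ws)
  case (Cons w ws)
  have "card {A\<in>P. Q w A} = (\<Sum>A\<in>P. of_bool (Q w A))"
    using assms by (simp add: Collect_conj_eq Int_commute)
  with Cons show ?case
    by (auto simp: sum.distrib[symmetric] intro!: sum.cong)
qed simp

section \<open>The triangle\<close>

lemma sum_subset_of_triangle:
  assumes "distinct [a, b, c]" "S \<subseteq> {a, b, c}"
  shows "(\<Sum>v\<in>S. w v)
    = (if a \<in> S then w a else 0) + (if b \<in> S then w b else 0) + (if c \<in> S then w c else 0)"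
proof -
  have "S = {a, b, c} \<inter> S"
    using assms(2) by blast
  then have "(\<Sum>v\<in>S. w v) = (\<Sum>v\<in>{a, b, c}. if v \<in> S then w v else 0)"
    by (metis finite.emptyI finite.insertI sum.inter_restrict)
  then show ?thesis
    using assms(1) by (simp add: add.assoc)
qed

definition triangle_weights :: "'a \<Rightarrow> 'a \<Rightarrow> 'a \<Rightarrow> ('a \<Rightarrow> real) list" where
  "triangle_weights a b c =
     map (\<lambda>(p, q, r) v. if v = a then p else if v = b then q else if v = c then r else 0)
       [(1, 0, 0), (1, 0, 0), (0, 1, 0), (0, 1, 0), (0, 0, 1), (0, 0, 1),
        (1, 1, -1), (1, -1, 1), (-1, 1, 1)]"

lemma sum_triangle_weights:
  assumes "distinct [a, b, c]" "w \<in> set (triangle_weights a b c)"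
  shows "(\<Sum>v\<in>{a, b, c}. w v) = 1"
  using assms by (auto simp: triangle_weights_def)

lemma length_triangle_weights: "length (triangle_weights a b c) = 9"
  by (simp add: triangle_weights_def)

lemma triangle_weights_nonzero_count:
  assumes "distinct [a, b, c]" "S \<subseteq> {a, b, c}" "S \<noteq> {}" "\<not> {a, b, c} \<subseteq> S"
  shows "length (filter (\<lambda>w. (\<Sum>v\<in>S. w v) \<noteq> 0) (triangle_weights a b c)) = 5"
proof -
  have "a \<in> S \<or> b \<in> S \<or> c \<in> S"
    using assms(2,3) by blast
  moreover have "\<not> (a \<in> S \<and> b \<in> S \<and> c \<in> S)"
    using assms(4) by blast
  ultimately show ?thesis
    using assms(1) unfolding sum_subset_of_triangle[OF assms(1,2)]
    by (cases "a \<in> S"; cases "b \<in> S"; cases "c \<in> S") (auto simp: triangle_weights_def)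
qed

lemma complete_graph_3: "complete_graph 3 = {{0, 1}, {0, 2}, {1, 2}}"
  unfolding complete_graph_def by (auto simp: eval_nat_numeral less_Suc_eq)

lemma card_block_partition_complete_graph_3:
  assumes P: "block_partition (complete_graph 3) (complete_graph n) P"
  shows "9 * (n - 1) \<le> 5 * card P"
proof -
  define ws where "ws = triangle_weights {0, 1 :: nat} {0, 2} {1, 2}"
  have distinct: "distinct [{0, 1 :: nat}, {0, 2}, {1, 2}]"
    by (simp add: doubleton_eq_iff)
  have "finite P" and blocks: "P \<subseteq> blocks (complete_graph 3) (complete_graph n)"
    using P unfolding block_partition_def by auto
  have "9 * (n - 1) = (\<Sum>w\<leftarrow>ws. n - 1)"
    by (simp add: ws_def length_triangle_weights sum_list_triv)
  also have "\<dots> \<le> (\<Sum>w\<leftarrow>ws. card {A\<in>P. (\<Sum>e\<in>fst ` A. w e) \<noteq> 0})"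
  proof (rule sum_list_mono)
    fix w assume "w \<in> set ws"
    then have "(\<Sum>e\<in>complete_graph 3. w e) \<noteq> 0"
      unfolding ws_def complete_graph_3 using sum_triangle_weights[OF distinct] by simp
    then show "n - 1 \<le> card {A\<in>P. (\<Sum>e\<in>fst ` A. w e) \<noteq> 0}"
      by (rule card_blocks_nonzero_weight[OF P])
  qed
  also have "\<dots> = (\<Sum>A\<in>P. length (filter (\<lambda>w. (\<Sum>e\<in>fst ` A. w e) \<noteq> 0) ws))"
    by (rule sum_list_card_filter[OF \<open>finite P\<close>])
  also have "\<dots> = (\<Sum>A\<in>P. 5)"
  proof (rule sum.cong[OF refl])
    fix A assume "A \<in> P"
    then have S: "fst ` A \<in> cbs_edge_sets (complete_graph 3)"
      using blocks blocks_fst_snd(2) by blast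
    show "length (filter (\<lambda>w. (\<Sum>e\<in>fst ` A. w e) \<noteq> 0) ws) = 5"
      unfolding ws_def
    proof (rule triangle_weights_nonzero_count[OF distinct])
      show "fst ` A \<subseteq> {{0, 1}, {0, 2}, {1, 2}}" "fst ` A \<noteq> {}"
        using cbs_edge_sets_nonempty_subset[OF S] unfolding complete_graph_3 by simp_all
      show "\<not> {{0, 1}, {0, 2}, {1, 2}} \<subseteq> fst ` A"
        by (rule cbs_edge_sets_triangle_free[OF S])
    qed
  qed
  finally show ?thesis
    by simp
qed

theorem mainTheorem6:
  fixes n :: nat
  assumes "n \<ge> 2"
  shows "9 / 5 * (real n - 1) \<le> real (g (complete_graph 3) (complete_graph n))
       \<and> real (g (complete_graph 3) (complete_graph n)) \<le> 2 * (real n - 1)"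
proof -
  let ?g = "g (complete_graph 3) (complete_graph n)"
  obtain P0 where P0: "block_partition (complete_graph 3) (complete_graph n) P0" "card P0 = 2 * (n - 1)"
    by (rule block_partition_complete_graph_3_stars)
  then have upper: "?g \<le> 2 * (n - 1)"
    using g_le_card by metis
  obtain P where "block_partition (complete_graph 3) (complete_graph n) P" "card P = ?g"
    using g_attained[OF P0(1)] .
  then have lower: "9 * (n - 1) \<le> 5 * ?g"
    using card_block_partition_complete_graph_3 by metis
  have "real (9 * (n - 1)) \<le> real (5 * ?g)"
    using lower by (rule of_nat_mono)
  moreover have "real ?g \<le> real (2 * (n - 1))"
    using upper by (rule of_nat_mono)
  moreover have "real (n - 1) = real n - 1"
    using assms by simp
  ultimately show ?thesis
    by simp
qed

end
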